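(* Let $d\ge 2$ and let $V$ be a finite subset of the unit sphere $S^{d-1}\subset\mathbb{R}^d$ which is centrally symmetric, i.e. $v\in V$ implies $-v\in V$. Let $V^+$ be the set of vectors in $V$ whose first non-zero coordinate is positive, so that $V$ is the disjoint union of $V^+$ and $-V^+$. Let $\mathcal{A}\subseteq\mathbb{R}^d$ be a measurable set which is centrally antisymmetric, i.e. $\mathcal{A}\cap(-\mathcal{A})=\emptyset$. Let $T$ be a random orthogonal matrix uniformly distributed on $O(d)$ (normalized Haar measure), and let $(r_v)_{v\in V}$ be independent random variables, each with the $\chi$-distribution with $d$ degrees of freedom, independent of $T$. Define $$\hat p^V=\frac{1}{|V|}\sum_{v\in V} I_{\mathcal{A}}(r_v\,Tv),\qquad \hat p^V_{AT}=\frac{1}{|V|}\sum_{v\in V^+}\Big(I_{\mathcal{A}}(r_v\,Tv)+I_{\mathcal{A}}(-r_v\,Tv)\Big).$$ Then $\operatorname{Var}(\hat p^V_{AT})\le \operatorname{Var}(\hat p^V)$.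
   Context: $I_{\mathcal{A}}$ denotes the indicator function of $\mathcal{A}$. The $\chi$-distribution with $d$ degrees of freedom is the distribution of $\|Z\|$ for $Z$ a $d$-dimensional standard normal vector. Both $\hat p^V$ and $\hat p^V_{AT}$ are estimators of $P\{Z\in\mathcal{A}\}$ for $Z\sim N_d(0,I)$. *)

theory Defs
  imports "HOL-Analysis.Analysis" "HOL-Probability.Probability"
begin

definition chi_distr :: "nat \<Rightarrow> real measure" where
  "chi_distr d = distr (PiM {..<d} (\<lambda>_. density lborel std_normal_density)) borel
                      (\<lambda>z. sqrt (\<Sum>i<d. (z i)\<^sup>2))"

definition is_haar_orthogonal :: "(real^'d^'d) measure \<Rightarrow> bool" where
  "is_haar_orthogonal \<mu> \<longleftrightarrow>
     prob_space \<mu> \<and> sets \<mu> = sets borel \<and>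
     (AE Q in \<mu>. orthogonal_matrix Q) \<and>
     (\<forall>Q0. orthogonal_matrix Q0 \<longrightarrow> distr \<mu> borel (\<lambda>Q. Q0 ** Q) = \<mu>)"

definition first_nonzero_pos :: "real^('d::{finite,linorder}) \<Rightarrow> bool" where
  "first_nonzero_pos x \<longleftrightarrow> (\<exists>i. 0 < x $ i \<and> (\<forall>j<i. x $ j = 0))"

definition pos_part_set :: "(real^('d::{finite,linorder})) set \<Rightarrow> (real^('d::{finite,linorder})) set" where
  "pos_part_set V = {v \<in> V. first_nonzero_pos v}"

end

theory Submission
  imports Defs
begin

text \<open>
  Split V into the pairs {v, -v} with v in V+. Both estimators are then (1/|V|) times a sum over
  V+ of bounded summands, P(v) = I(r(v) Tv) + I(r(-v) T(-v)) for the plain estimator and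
  Q(v) = I(r(v) Tv) + I(-r(v) Tv) for the antithetic one. Since the radii are i.i.d. and
  independent of T, the joint law of (T, r(a), r(b)) is the same for all a \<noteq> b, and the law of
  (T, r(a)) is the same for all a. Hence P(v) and Q(v) have equal means, and the mixed moments
  E[P(v) P(w)] and E[Q(v) Q(w)] agree for v \<noteq> w. On the diagonal, antisymmetry of A makes Q(v)
  a 0/1 variable, so E[Q(v)^2] = E[Q(v)] = E[P(v)] \<le> E[P(v)^2].
\<close>

lemma (in prob_space) distr_pair_eq_pair_measure_if_indep_set:
  assumes X: "random_variable S X" and Y: "random_variable S' Y"
    and ind: "indep_set (sigma_sets (space M) {X -` A \<inter> space M |A. A \<in> sets S})
                        (sigma_sets (space M) {Y -` A \<inter> space M |A. A \<in> sets S'})"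
  shows "distr M (S \<Otimes>\<^sub>M S') (\<lambda>\<omega>. (X \<omega>, Y \<omega>)) = distr M S X \<Otimes>\<^sub>M distr M S' Y"
proof -
  have XY: "random_variable (S \<Otimes>\<^sub>M S') (\<lambda>\<omega>. (X \<omega>, Y \<omega>))"
    using X Y by (rule measurable_Pair)
  interpret X: prob_space "distr M S X" by (rule prob_space_distr) fact
  interpret Y: prob_space "distr M S' Y" by (rule prob_space_distr) fact
  interpret XY: pair_prob_space "distr M S X" "distr M S' Y" ..
  show ?thesis
  proof (rule pair_measure_eqI[symmetric])
    show "sigma_finite_measure (distr M S X)" "sigma_finite_measure (distr M S' Y)" ..
    fix A B assume A: "A \<in> sets (distr M S X)" and B: "B \<in> sets (distr M S' Y)"
    have "X -` A \<inter> space M \<in> sigma_sets (space M) {X -` A \<inter> space M |A. A \<in> sets S}"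
      "Y -` B \<inter> space M \<in> sigma_sets (space M) {Y -` A \<inter> space M |A. A \<in> sets S'}"
      using A B by (auto intro: sigma_sets.Basic)
    then have "measure M (X -` A \<inter> space M \<inter> (Y -` B \<inter> space M))
        = measure M (X -` A \<inter> space M) * measure M (Y -` B \<inter> space M)"
      using ind unfolding indep_sets2_eq by blast
    moreover have "(\<lambda>\<omega>. (X \<omega>, Y \<omega>)) -` (A \<times> B) \<inter> space M = X -` A \<inter> space M \<inter> (Y -` B \<inter> space M)"
      by auto
    moreover have "X -` A \<inter> space M \<in> events" "Y -` B \<inter> space M \<in> events"
      using A B X Y by (auto intro: measurable_sets)
    ultimately have "emeasure M ((\<lambda>\<omega>. (X \<omega>, Y \<omega>)) -` (A \<times> B) \<inter> space M)
        = emeasure M (X -` A \<inter> space M) * emeasure M (Y -` B \<inter> space M)"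
      by (simp add: emeasure_eq_measure ennreal_mult)
    then show "emeasure (distr M S X) A * emeasure (distr M S' Y) B
        = emeasure (distr M (S \<Otimes>\<^sub>M S') (\<lambda>\<omega>. (X \<omega>, Y \<omega>))) (A \<times> B)"
      using A B X Y XY by (simp add: emeasure_distr)
  qed simp
qed

lemma (in prob_space) distr_pair_of_disjoint_groups:
  assumes ind: "indep_sets E I" and stable: "\<And>i. i \<in> I \<Longrightarrow> Int_stable (E i)"
    and K: "Ka \<subseteq> I" "Kb \<subseteq> I" "Ka \<inter> Kb = {}"
    and Xa: "Xa \<in> measurable (sigma (space M) (\<Union>i\<in>Ka. E i)) Sa"
    and Xb: "Xb \<in> measurable (sigma (space M) (\<Union>i\<in>Kb. E i)) Sb"
  shows "distr M (Sa \<Otimes>\<^sub>M Sb) (\<lambda>\<omega>. (Xa \<omega>, Xb \<omega>)) = distr M Sa Xa \<Otimes>\<^sub>M distr M Sb Xb"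
proof -
  have events: "(\<Union>i\<in>K. E i) \<subseteq> events" if "K \<subseteq> I" for K
    using ind that by (auto simp: indep_sets_def)
  have sub: "sets (sigma (space M) (\<Union>i\<in>K. E i)) \<subseteq> events" if "K \<subseteq> I" for K
    using events[OF that] sets.sets_into_space
    by (subst sets_measure_of) (auto intro!: sets.sigma_sets_subset)
  have pre: "sigma_sets (space M) {X -` A \<inter> space M |A. A \<in> sets S} \<subseteq> sigma_sets (space M) (\<Union>i\<in>K. E i)"
    if "K \<subseteq> I" "X \<in> measurable (sigma (space M) (\<Union>i\<in>K. E i)) S"
    for X :: "'a \<Rightarrow> 'x" and K S
  proof (rule sigma_sets_mono)
    have "(\<Union>i\<in>K. E i) \<subseteq> Pow (space M)"
      using events[OF that(1)] sets.sets_into_space by blast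
    then have "X -` A \<inter> space M \<in> sigma_sets (space M) (\<Union>i\<in>K. E i)" if "A \<in> sets S" for A
      using measurable_sets[OF \<open>X \<in> _\<close> that] by simp
    then show "{X -` A \<inter> space M |A. A \<in> sets S} \<subseteq> sigma_sets (space M) (\<Union>i\<in>K. E i)"
      by blast
  qed
  have "indep_sets (\<lambda>j. sigma_sets (space M) (\<Union>i\<in>case_bool Ka Kb j. E i)) UNIV"
    by (rule indep_sets_collect_sigma[OF indep_sets_mono_index[OF _ ind]])
       (use stable K in \<open>auto simp: disjoint_family_on_def split: bool.splits\<close>)
  then have indep: "indep_set (sigma_sets (space M) {Xa -` A \<inter> space M |A. A \<in> sets Sa})
                       (sigma_sets (space M) {Xb -` A \<inter> space M |A. A \<in> sets Sb})"
    unfolding indep_set_def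
    by (rule indep_sets_mono_sets) (use pre[OF K(1) Xa] pre[OF K(2) Xb] in \<open>auto split: bool.splits\<close>)
  have rv: "random_variable Sa Xa" "random_variable Sb Xb"
    using Xa Xb measurable_mono[OF order_refl refl sub[OF K(1)]] measurable_mono[OF order_refl refl sub[OF K(2)]]
    by (auto simp: space_measure_of_conv)
  show ?thesis
    by (rule distr_pair_eq_pair_measure_if_indep_set[OF rv indep])
qed

lemma (in prob_space) variance_scaled_sum:
  fixes R :: "'i \<Rightarrow> 'a \<Rightarrow> real"
  assumes W: "finite W" and R: "\<And>i. i \<in> W \<Longrightarrow> R i \<in> borel_measurable M"
    and bounded: "\<And>i \<omega>. i \<in> W \<Longrightarrow> \<bar>R i \<omega>\<bar> \<le> K"
  shows "variance (\<lambda>\<omega>. c * (\<Sum>i\<in>W. R i \<omega>))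
    = c\<^sup>2 * ((\<Sum>i\<in>W. \<Sum>j\<in>W. \<integral>\<omega>. R i \<omega> * R j \<omega> \<partial>M) - (\<Sum>i\<in>W. \<integral>\<omega>. R i \<omega> \<partial>M)\<^sup>2)"
proof -
  have int_R: "integrable M (R i)" if "i \<in> W" for i
    using R bounded that by (intro integrable_const_bound[where B=K]) auto
  have int_RR: "integrable M (\<lambda>\<omega>. R i \<omega> * R j \<omega>)" if "i \<in> W" "j \<in> W" for i j
    using R bounded that
    by (intro integrable_const_bound[where B="K * K"]) (auto simp: abs_mult intro!: mult_mono')
  have square: "(c * (\<Sum>i\<in>W. R i \<omega>))\<^sup>2 = c\<^sup>2 * (\<Sum>i\<in>W. \<Sum>j\<in>W. R i \<omega> * R j \<omega>)" for \<omega>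
    by (simp add: power2_eq_square sum_product algebra_simps)
  have "variance (\<lambda>\<omega>. c * (\<Sum>i\<in>W. R i \<omega>))
      = (\<integral>\<omega>. (c * (\<Sum>i\<in>W. R i \<omega>))\<^sup>2 \<partial>M) - (\<integral>\<omega>. c * (\<Sum>i\<in>W. R i \<omega>) \<partial>M)\<^sup>2"
    using int_R int_RR by (intro variance_eq) (auto simp: square)
  also have "\<dots> = c\<^sup>2 * (\<Sum>i\<in>W. \<Sum>j\<in>W. \<integral>\<omega>. R i \<omega> * R j \<omega> \<partial>M) - (c * (\<Sum>i\<in>W. \<integral>\<omega>. R i \<omega> \<partial>M))\<^sup>2"
    using int_R int_RR by (simp add: square integral_sum)
  finally show ?thesis
    by (simp add: power_mult_distrib right_diff_distrib)
qed

lemma Int_stable_preimages: "Int_stable {f -` B \<inter> \<Omega> | B. B \<in> sets N}"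
proof (rule Int_stableI, clarify)
  fix B B' assume "B \<in> sets N" "B' \<in> sets N"
  moreover have "f -` B \<inter> \<Omega> \<inter> (f -` B' \<inter> \<Omega>) = f -` (B \<inter> B') \<inter> \<Omega>"
    by auto
  ultimately show "\<exists>C. f -` B \<inter> \<Omega> \<inter> (f -` B' \<inter> \<Omega>) = f -` C \<inter> \<Omega> \<and> C \<in> sets N"
    by blast
qed

lemma measurable_sigma_of_preimages:
  assumes "{f -` B \<inter> \<Omega> | B. B \<in> sets (borel :: 'x::topological_space measure)} \<subseteq> G"
    and "G \<subseteq> Pow \<Omega>"
  shows "f \<in> measurable (sigma \<Omega> G) borel"
proof (rule measurableI)
  fix A :: "'x set" assume "A \<in> sets borel"
  then show "f -` A \<inter> space (sigma \<Omega> G) \<in> sets (sigma \<Omega> G)"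
    using assms by auto
qed auto

locale indep_iid_family = prob_space M for M :: "'a measure" +
  fixes T :: "'a \<Rightarrow> 'm::topological_space" and r :: "'v \<Rightarrow> 'a \<Rightarrow> real"
    and V :: "'v set" and D :: "real measure"
  assumes indep: "indep_sets
      (\<lambda>i. case i of None \<Rightarrow> {T -` B \<inter> space M | B. B \<in> sets (borel :: 'm measure)}
                   | Some v \<Rightarrow> {r v -` B \<inter> space M | B. B \<in> sets (borel :: real measure)})
      (insert None (Some ` V))"
    and identically_distributed: "\<And>v. v \<in> V \<Longrightarrow> distr M borel (r v) = D"
begin

definition generators :: "'v option \<Rightarrow> 'a set set" where
  "generators i = (case i of None \<Rightarrow> {T -` B \<inter> space M | B. B \<in> sets (borel :: 'm measure)}
                   | Some v \<Rightarrow> {r v -` B \<inter> space M | B. B \<in> sets (borel :: real measure)})"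

lemma Int_stable_generators: "Int_stable (generators i)"
  by (cases i) (simp_all add: generators_def Int_stable_preimages)

lemma indep_generators: "indep_sets generators (insert None (Some ` V))"
  using indep unfolding generators_def .

lemma generators_subset_Pow: "(\<Union>i\<in>K. generators i) \<subseteq> Pow (space M)"
  by (auto simp: generators_def split: option.splits)

lemma measurable_T_generated:
  "None \<in> K \<Longrightarrow> T \<in> measurable (sigma (space M) (\<Union>i\<in>K. generators i)) borel"
  by (rule measurable_sigma_of_preimages[OF _ generators_subset_Pow]) (force simp: generators_def)

lemma measurable_r_generated:
  "Some v \<in> K \<Longrightarrow> r v \<in> measurable (sigma (space M) (\<Union>i\<in>K. generators i)) borel"
  by (rule measurable_sigma_of_preimages[OF _ generators_subset_Pow]) (force simp: generators_def)

lemma distr_T_r: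
  assumes "v \<in> V"
  shows "distr M (borel \<Otimes>\<^sub>M borel) (\<lambda>\<omega>. (T \<omega>, r v \<omega>)) = distr M borel T \<Otimes>\<^sub>M D"
proof -
  have K: "{None} \<subseteq> insert None (Some ` V)" "{Some v} \<subseteq> insert None (Some ` V)" "{None} \<inter> {Some v} = {}"
    using assms by auto
  have "distr M (borel \<Otimes>\<^sub>M borel) (\<lambda>\<omega>. (T \<omega>, r v \<omega>)) = distr M borel T \<Otimes>\<^sub>M distr M borel (r v)"
    by (rule distr_pair_of_disjoint_groups[OF indep_generators Int_stable_generators K
          measurable_T_generated[OF singletonI] measurable_r_generated[OF singletonI]])
  then show ?thesis
    by (simp only: identically_distributed assms)
qed

lemma distr_T_pair:
  assumes "x \<in> V" "y \<in> V" "x \<noteq> y"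
  shows "distr M (borel \<Otimes>\<^sub>M (borel \<Otimes>\<^sub>M borel)) (\<lambda>\<omega>. (T \<omega>, (r x \<omega>, r y \<omega>)))
    = distr M borel T \<Otimes>\<^sub>M (D \<Otimes>\<^sub>M D)"
proof -
  have K: "{Some x} \<subseteq> insert None (Some ` V)" "{Some y} \<subseteq> insert None (Some ` V)" "{Some x} \<inter> {Some y} = {}"
    "{None} \<subseteq> insert None (Some ` V)" "{Some x, Some y} \<subseteq> insert None (Some ` V)"
    "{None} \<inter> {Some x, Some y} = {}"
    using assms by auto
  have "distr M (borel \<Otimes>\<^sub>M borel) (\<lambda>\<omega>. (r x \<omega>, r y \<omega>)) = distr M borel (r x) \<Otimes>\<^sub>M distr M borel (r y)"
    by (rule distr_pair_of_disjoint_groups[OF indep_generators Int_stable_generators K(1-3)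
          measurable_r_generated[OF singletonI] measurable_r_generated[OF singletonI]])
  then have pair_law: "distr M (borel \<Otimes>\<^sub>M borel) (\<lambda>\<omega>. (r x \<omega>, r y \<omega>)) = D \<Otimes>\<^sub>M D"
    by (simp only: identically_distributed assms)
  have pair_measurable: "(\<lambda>\<omega>. (r x \<omega>, r y \<omega>))
      \<in> measurable (sigma (space M) (\<Union>i\<in>{Some x, Some y}. generators i)) (borel \<Otimes>\<^sub>M borel)"
    by (intro measurable_Pair measurable_r_generated) auto
  have "distr M (borel \<Otimes>\<^sub>M (borel \<Otimes>\<^sub>M borel)) (\<lambda>\<omega>. (T \<omega>, (r x \<omega>, r y \<omega>)))
      = distr M borel T \<Otimes>\<^sub>M distr M (borel \<Otimes>\<^sub>M borel) (\<lambda>\<omega>. (r x \<omega>, r y \<omega>))"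
    by (rule distr_pair_of_disjoint_groups[OF indep_generators Int_stable_generators K(4-6)
          measurable_T_generated[OF singletonI] pair_measurable])
  then show ?thesis
    unfolding pair_law .
qed

lemma random_variable_T: "random_variable borel T"
proof (rule measurableI)
  fix B :: "'m set" assume "B \<in> sets borel"
  then show "T -` B \<inter> space M \<in> events"
    using indep_generators by (auto simp: indep_sets_def generators_def)
qed simp

lemma random_variable_r: "v \<in> V \<Longrightarrow> random_variable borel (r v)"
proof (rule measurableI)
  fix B :: "real set" assume "v \<in> V" "B \<in> sets borel"
  then show "r v -` B \<inter> space M \<in> events"
    using indep_generators by (auto simp: indep_sets_def generators_def)
qed simp

lemma integral_T_r_eq:
  fixes h :: "'m \<times> real \<Rightarrow> real"
  assumes "a \<in> V" "c \<in> V" and h: "h \<in> borel_measurable (borel \<Otimes>\<^sub>M borel)"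
  shows "(\<integral>\<omega>. h (T \<omega>, r a \<omega>) \<partial>M) = (\<integral>\<omega>. h (T \<omega>, r c \<omega>) \<partial>M)"
proof -
  have "(\<integral>\<omega>. h (T \<omega>, r v \<omega>) \<partial>M) = integral\<^sup>L (distr M borel T \<Otimes>\<^sub>M D) h" if "v \<in> V" for v
    using integral_distr[OF measurable_Pair[OF random_variable_T random_variable_r[OF that]] h]
    by (simp add: distr_T_r[OF that])
  then show ?thesis
    using assms by simp
qed

lemma integral_T_pair_eq:
  fixes h :: "'m \<times> real \<times> real \<Rightarrow> real"
  assumes "a \<in> V" "b \<in> V" "a \<noteq> b" "c \<in> V" "e \<in> V" "c \<noteq> e"
    and h: "h \<in> borel_measurable (borel \<Otimes>\<^sub>M (borel \<Otimes>\<^sub>M borel))"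
  shows "(\<integral>\<omega>. h (T \<omega>, (r a \<omega>, r b \<omega>)) \<partial>M) = (\<integral>\<omega>. h (T \<omega>, (r c \<omega>, r e \<omega>)) \<partial>M)"
proof -
  have "(\<integral>\<omega>. h (T \<omega>, (r x \<omega>, r y \<omega>)) \<partial>M) = integral\<^sup>L (distr M borel T \<Otimes>\<^sub>M (D \<Otimes>\<^sub>M D)) h"
    if "x \<in> V" "y \<in> V" "x \<noteq> y" for x y
    using integral_distr[OF measurable_Pair[OF random_variable_T
            measurable_Pair[OF random_variable_r[OF that(1)] random_variable_r[OF that(2)]]] h]
    by (simp add: distr_T_pair[OF that])
  then show ?thesis
    using assms by simp
qed

lemma antithetic_variance_le:
  fixes B :: "'v \<Rightarrow> ('m \<times> real) set" and p :: "'v \<Rightarrow> 'v" and c :: real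
  assumes W: "finite W" "W \<subseteq> V" "p ` W \<subseteq> V" "inj_on p W" "W \<inter> p ` W = {}"
    and B: "\<And>v. B v \<in> sets (borel \<Otimes>\<^sub>M borel)"
    and disjoint: "\<And>w. w \<in> W \<Longrightarrow> B w \<inter> B (p w) = {}"
  shows "variance (\<lambda>\<omega>. c * (\<Sum>w\<in>W. indicator (B w) (T \<omega>, r w \<omega>) + indicator (B (p w)) (T \<omega>, r w \<omega>) :: real))
    \<le> variance (\<lambda>\<omega>. c * (\<Sum>w\<in>W. indicator (B w) (T \<omega>, r w \<omega>) + indicator (B (p w)) (T \<omega>, r (p w) \<omega>) :: real))"
proof -
  define Y where "Y a q \<omega> = (indicator (B q) (T \<omega>, r a \<omega>) :: real)" for a q \<omega>
  define P where "P w \<omega> = Y w w \<omega> + Y (p w) (p w) \<omega>" for w \<omega>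
  define Q where "Q w \<omega> = Y w w \<omega> + Y w (p w) \<omega>" for w \<omega>
  have Y_measurable: "Y a q \<in> borel_measurable M" if "a \<in> V" for a q
    unfolding Y_def
    by (rule measurable_compose[OF measurable_Pair[OF random_variable_T random_variable_r[OF that]]
          borel_measurable_indicator[OF B]])
  have Y_01: "Y a q \<omega> = 0 \<or> Y a q \<omega> = 1" for a q \<omega>
    by (simp add: Y_def indicator_def)
  have int_YY: "integrable M (\<lambda>\<omega>. Y a q \<omega> * Y b q' \<omega>)" if "a \<in> V" "b \<in> V" for a b q q'
  proof (rule integrable_const_bound[where B=1])
    show "AE \<omega> in M. norm (Y a q \<omega> * Y b q' \<omega>) \<le> 1"
      using Y_01[of a q] Y_01[of b q'] by (intro AE_I2) (metis mult_1 mult_zero_left norm_one norm_zero order_refl zero_le_one)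
  qed (use Y_measurable that in auto)
  have Y_square: "Y a q \<omega> * Y a q \<omega> = Y a q \<omega>" for a q \<omega>
    using Y_01[of a q \<omega>] by auto
  have int_Y: "integrable M (Y a q)" if "a \<in> V" for a q
    using int_YY[OF that that, of q q] by (simp add: Y_square)
  have Y_exchange: "(\<integral>\<omega>. Y a q \<omega> \<partial>M) = (\<integral>\<omega>. Y a' q \<omega> \<partial>M)" if "a \<in> V" "a' \<in> V" for a a' q
    unfolding Y_def using that by (rule integral_T_r_eq) (rule borel_measurable_indicator[OF B])
  have YY_exchange: "(\<integral>\<omega>. Y a q \<omega> * Y b q' \<omega> \<partial>M) = (\<integral>\<omega>. Y a' q \<omega> * Y b' q' \<omega> \<partial>M)"
    if "a \<in> V" "b \<in> V" "a \<noteq> b" "a' \<in> V" "b' \<in> V" "a' \<noteq> b'" for a b a' b' q q'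
  proof -
    have [measurable]: "B q \<in> sets (borel \<Otimes>\<^sub>M borel)" "B q' \<in> sets (borel \<Otimes>\<^sub>M borel)"
      using B by auto
    have "(\<lambda>z :: 'm \<times> real \<times> real. indicator (B q) (fst z, fst (snd z)) * indicator (B q') (fst z, snd (snd z)) :: real)
        \<in> borel_measurable (borel \<Otimes>\<^sub>M (borel \<Otimes>\<^sub>M borel))"
      by measurable
    from integral_T_pair_eq[OF that this] show ?thesis
      by (simp add: Y_def)
  qed
  have in_V: "w \<in> V" "p w \<in> V" if "w \<in> W" for w
    using W that by auto
  have mean_eq: "(\<integral>\<omega>. Q w \<omega> \<partial>M) = (\<integral>\<omega>. P w \<omega> \<partial>M)" if "w \<in> W" for w
    using int_Y in_V[OF that] Y_exchange[OF in_V[OF that], of "p w"] by (simp add: P_def Q_def)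
  have cross_eq: "(\<integral>\<omega>. Q i \<omega> * Q j \<omega> \<partial>M) = (\<integral>\<omega>. P i \<omega> * P j \<omega> \<partial>M)"
    if "i \<in> W" "j \<in> W" "i \<noteq> j" for i j
  proof -
    have distinct: "i \<noteq> p j" "p i \<noteq> j" "p i \<noteq> p j"
      using W that by (auto simp: inj_on_def)
    have "(\<integral>\<omega>. Y i i \<omega> * Y (p j) (p j) \<omega> \<partial>M) = (\<integral>\<omega>. Y i i \<omega> * Y j (p j) \<omega> \<partial>M)"
      "(\<integral>\<omega>. Y (p i) (p i) \<omega> * Y j j \<omega> \<partial>M) = (\<integral>\<omega>. Y i (p i) \<omega> * Y j j \<omega> \<partial>M)"
      "(\<integral>\<omega>. Y (p i) (p i) \<omega> * Y (p j) (p j) \<omega> \<partial>M) = (\<integral>\<omega>. Y i (p i) \<omega> * Y j (p j) \<omega> \<partial>M)"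
      by (rule YY_exchange; use in_V that distinct in simp)+
    then show ?thesis
      using int_YY in_V that by (simp add: P_def Q_def distrib_left distrib_right)
  qed
  have diag_le: "(\<integral>\<omega>. Q w \<omega> * Q w \<omega> \<partial>M) \<le> (\<integral>\<omega>. P w \<omega> * P w \<omega> \<partial>M)" if "w \<in> W" for w
  proof -
    have Q_idem: "Q w \<omega> * Q w \<omega> = Q w \<omega>" for \<omega>
    proof -
      have "Y w w \<omega> = 0 \<or> Y w (p w) \<omega> = 0"
        using disjoint[OF that] by (auto simp: Y_def indicator_def)
      then show ?thesis
        using Y_01[of w w \<omega>] Y_01[of w "p w" \<omega>] by (auto simp: Q_def)
    qed
    have "(\<integral>\<omega>. Q w \<omega> * Q w \<omega> \<partial>M) = (\<integral>\<omega>. P w \<omega> \<partial>M)"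
      unfolding Q_idem by (rule mean_eq[OF that])
    also have "\<dots> \<le> (\<integral>\<omega>. P w \<omega> * P w \<omega> \<partial>M)"
    proof (rule integral_mono)
      show "P w \<omega> \<le> P w \<omega> * P w \<omega>" for \<omega>
        using Y_01[of w w \<omega>] Y_01[of "p w" "p w" \<omega>] by (auto simp: P_def)
    qed (use int_Y int_YY in_V[OF that] in \<open>simp_all add: P_def distrib_left distrib_right\<close>)
    finally show ?thesis .
  qed
  have bounded: "\<bar>P w \<omega>\<bar> \<le> 2" "\<bar>Q w \<omega>\<bar> \<le> 2" for w \<omega>
    using Y_01[of w w \<omega>] Y_01[of "p w" "p w" \<omega>] Y_01[of w "p w" \<omega>] by (auto simp: P_def Q_def)
  have measurable: "P w \<in> borel_measurable M" "Q w \<in> borel_measurable M" if "w \<in> W" for w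
    unfolding P_def Q_def using Y_measurable in_V[OF that] by auto
  have "(\<Sum>i\<in>W. \<Sum>j\<in>W. \<integral>\<omega>. Q i \<omega> * Q j \<omega> \<partial>M) \<le> (\<Sum>i\<in>W. \<Sum>j\<in>W. \<integral>\<omega>. P i \<omega> * P j \<omega> \<partial>M)"
    using diag_le cross_eq by (intro sum_mono) (metis order_refl)
  moreover have "(\<Sum>i\<in>W. \<integral>\<omega>. Q i \<omega> \<partial>M) = (\<Sum>i\<in>W. \<integral>\<omega>. P i \<omega> \<partial>M)"
    using mean_eq by (rule sum.cong[OF refl])
  ultimately have "variance (\<lambda>\<omega>. c * (\<Sum>w\<in>W. Q w \<omega>)) \<le> variance (\<lambda>\<omega>. c * (\<Sum>w\<in>W. P w \<omega>))"
    using variance_scaled_sum[OF W(1), of Q 2 c] variance_scaled_sum[OF W(1), of P 2 c] measurable bounded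
    by (simp add: mult_left_mono)
  then show ?thesis
    by (simp add: P_def Q_def Y_def)
qed

end

lemma first_nonzero_pos_uminus: "first_nonzero_pos v \<Longrightarrow> \<not> first_nonzero_pos (- v)"
proof
  assume "first_nonzero_pos v" "first_nonzero_pos (- v)"
  then obtain i i' where i: "0 < v $ i" "\<forall>j<i. v $ j = 0" and i': "0 < (- v) $ i'" "\<forall>j<i'. (- v) $ j = 0"
    unfolding first_nonzero_pos_def by blast
  show False
  proof (cases i i' rule: linorder_cases)
    case less
    then show ?thesis using i i' by fastforce
  next
    case equal
    then show ?thesis using i i' by simp
  next
    case greater
    then show ?thesis using i i' by fastforce
  qed
qed

lemma first_nonzero_pos_or_uminus:
  fixes v :: "real^('d::{finite,linorder})"
  assumes "v \<noteq> 0"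
  shows "first_nonzero_pos v \<or> first_nonzero_pos (- v)"
proof -
  define i where "i = Min {i. v $ i \<noteq> 0}"
  have nonempty: "{i. v $ i \<noteq> 0} \<noteq> {}"
    using assms by (auto simp: vec_eq_iff)
  have "v $ i \<noteq> 0"
    using Min_in[OF _ nonempty] by (simp add: i_def)
  moreover have below: "\<forall>j<i. v $ j = 0"
  proof (intro allI impI)
    fix j assume "j < i"
    show "v $ j = 0"
    proof (rule ccontr)
      assume "v $ j \<noteq> 0"
      then have "i \<le> j"
        unfolding i_def by (intro Min_le) auto
      with \<open>j < i\<close> show False
        by simp
    qed
  qed
  ultimately have "0 < v $ i \<or> 0 < (- v) $ i"
    by auto
  then show ?thesis
    unfolding first_nonzero_pos_def using below by auto
qed

lemma pos_part_set_disjoint_uminus: "pos_part_set V \<inter> uminus ` pos_part_set V = {}"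
  by (auto simp: pos_part_set_def dest: first_nonzero_pos_uminus)

lemma sum_symmetric_set_eq_sum_pos_part_set:
  fixes V :: "(real^('d::{finite,linorder})) set"
  assumes "finite V" "0 \<notin> V" "\<forall>v\<in>V. - v \<in> V"
  shows "(\<Sum>v\<in>V. f v) = (\<Sum>v\<in>pos_part_set V. f v + f (- v))"
proof -
  have "V = pos_part_set V \<union> uminus ` pos_part_set V"
  proof
    show "V \<subseteq> pos_part_set V \<union> uminus ` pos_part_set V"
    proof
      fix v assume "v \<in> V"
      then have "first_nonzero_pos v \<or> first_nonzero_pos (- v)" "- v \<in> V"
        using assms first_nonzero_pos_or_uminus[of v] by fastforce+
      then show "v \<in> pos_part_set V \<union> uminus ` pos_part_set V"
        using \<open>v \<in> V\<close> by (auto simp: pos_part_set_def image_iff intro: bexI[of _ "- v"])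
    qed
  qed (use assms in \<open>auto simp: pos_part_set_def\<close>)
  then have "(\<Sum>v\<in>V. f v) = (\<Sum>v\<in>pos_part_set V. f v) + (\<Sum>v\<in>uminus ` pos_part_set V. f v)"
    using assms(1) pos_part_set_disjoint_uminus
    by (metis finite_Un sum.union_disjoint)
  also have "(\<Sum>v\<in>uminus ` pos_part_set V. f v) = (\<Sum>v\<in>pos_part_set V. f (- v))"
    by (simp add: sum.reindex)
  finally show ?thesis
    by (simp add: sum.distrib)
qed

lemma sets_preimage_scaleR_matrix_vector_mult:
  fixes A :: "(real^'m) set"
  assumes "A \<in> sets borel"
  shows "{z :: (real^'n^'m) \<times> real. snd z *\<^sub>R (fst z *v p) \<in> A} \<in> sets (borel \<Otimes>\<^sub>M borel)"
proof -
  have "continuous_on UNIV (\<lambda>t::real^'n^'m. t *v p)"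
    unfolding matrix_vector_mult_def
    by (intro continuous_on_vec_lambda continuous_on_sum continuous_on_mult continuous_on_component
        continuous_on_id continuous_on_const)
  then have "(\<lambda>z :: (real^'n^'m) \<times> real. snd z *\<^sub>R (fst z *v p)) \<in> borel_measurable (borel \<Otimes>\<^sub>M borel)"
    by (intro borel_measurable_scaleR measurable_snd
        measurable_compose[OF measurable_fst borel_measurable_continuous_onI])
  from measurable_sets[OF this assms] show ?thesis
    by (simp add: vimage_def space_pair_measure)
qed

lemma scaleR_matrix_vector_mult_uminus: "x *\<^sub>R (t *v - p) = - (x *\<^sub>R (t *v p))"
  for t :: "real^'n^'m"
  by (simp add: linear_neg[OF matrix_vector_mul_linear])

theorem theorem2:
  fixes V :: "(real^('d::{finite,linorder})) set"
    and A :: "(real^('d::{finite,linorder})) set"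
    and M :: "'w measure"
    and T :: "'w \<Rightarrow> real^('d::{finite,linorder})^('d::{finite,linorder})"
    and r :: "real^('d::{finite,linorder}) \<Rightarrow> 'w \<Rightarrow> real"
  assumes d2: "CARD('d::{finite,linorder}) \<ge> 2"
    and V_fin: "finite V"
    and V_sphere: "V \<subseteq> sphere 0 1"
    and V_sym: "\<forall>v\<in>V. - v \<in> V"
    and A_meas: "A \<in> sets borel"
    and A_anti: "A \<inter> uminus ` A = {}"
    and M_prob: "prob_space M"
    and T_meas: "T \<in> borel_measurable M"
    and T_haar: "is_haar_orthogonal (distr M borel T)"
    and r_meas: "\<forall>v\<in>V. r v \<in> borel_measurable M"
    and r_chi: "\<forall>v\<in>V. distr M borel (r v) = chi_distr CARD('d::{finite,linorder})"
    and indep: "prob_space.indep_sets M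
        (\<lambda>i. case i of None \<Rightarrow> {T -` B \<inter> space M | B. B \<in> sets (borel :: (real^('d::{finite,linorder})^('d::{finite,linorder})) measure)}
                     | Some v \<Rightarrow> {r v -` B \<inter> space M | B. B \<in> sets (borel :: real measure)})
        (insert None (Some ` V))"
  shows "prob_space.variance M
           (\<lambda>\<omega>. (1 / real (card V)) * (\<Sum>v\<in>pos_part_set V.
               indicator A (r v \<omega> *\<^sub>R (T \<omega> *v v)) + indicator A (- (r v \<omega> *\<^sub>R (T \<omega> *v v)))))
         \<le> prob_space.variance M
           (\<lambda>\<omega>. (1 / real (card V)) * (\<Sum>v\<in>V. indicator A (r v \<omega> *\<^sub>R (T \<omega> *v v))))"
proof -
  interpret indep_iid_family M T r V "chi_distr CARD('d)"
    by (rule indep_iid_family.intro[OF M_prob]) (use indep r_chi in \<open>unfold_locales, auto\<close>)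
  define W where "W = pos_part_set V"
  define B where "B p = {z. snd z *\<^sub>R (fst z *v p) \<in> A}" for p :: "real^'d::{finite,linorder}"
  have indicator_B: "indicator (B p) (t, x) = (indicator A (x *\<^sub>R (t *v p)) :: real)" for p t x
    by (simp add: B_def indicator_def)
  have B_sets: "B p \<in> sets (borel \<Otimes>\<^sub>M borel)" for p
    unfolding B_def by (rule sets_preimage_scaleR_matrix_vector_mult[OF A_meas])
  have B_disjoint: "B p \<inter> B (- p) = {}" for p
    using A_anti by (auto simp: B_def scaleR_matrix_vector_mult_uminus)
  have zero_notin: "0 \<notin> V"
    using V_sphere by auto
  have W: "finite W" "W \<subseteq> V" "uminus ` W \<subseteq> V" "inj_on uminus W" "W \<inter> uminus ` W = {}"
    using V_fin V_sym pos_part_set_disjoint_uminus[of V] by (auto simp: W_def pos_part_set_def)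
  show ?thesis
    using antithetic_variance_le[where p=uminus and B=B and c="1 / real (card V)", OF W B_sets B_disjoint]
    by (simp add: W_def indicator_B scaleR_matrix_vector_mult_uminus sum_symmetric_set_eq_sum_pos_part_set[OF V_fin zero_notin V_sym])
qed

end
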